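(* Under the hypotheses and notation of the Hankel matrix representation below, the $2^N\times2^{N-1}$ submatrix $\mathbf H(:,1{:}2^{N-1})$ consisting of the first $2^{N-1}$ columns of $\mathbf H$ satisfies $$\mathbf H(:,1{:}2^{N-1})=\sum_{t_1}\cdots\sum_{t_{N-1}}\mathbf H^{(N)}_{1,t_{N-1}}(:,1)\otimes\mathbf H^{(N-1)}_{t_{N-1},t_{N-2}}\otimes\cdots\otimes\mathbf H^{(1)}_{t_1,1},$$ where $\mathbf H^{(N)}_{1,t_{N-1}}(:,1)\in\mathbb R^{2\times1}$ is the first column of $\mathbf H^{(N)}_{1,t_{N-1}}$.
   Context: Setting: $N\ge2$; $\mathbf s=[s_1,\dots,s_{2^N}]^{\mathrm T}$ given in TT format $s_{(k_1,\dots,k_N)}=\sum_{r_1=1}^{R_1}\cdots\sum_{r_{N-1}=1}^{R_{N-1}}s^{(1)}_{1,k_1,r_1}s^{(2)}_{r_1,k_2,r_2}\cdots s^{(N)}_{r_{N-1},k_N,1}$ ($k_m\in\{1,2\}$, $R_0=R_N=1$), where $(k_1,\dots,k_N)=k_1+2(k_2-1)+\cdots+2^{N-1}(k_N-1)$. $\mathbf H\in\mathbb R^{2^N\times2^N}$ has entries $\mathbf H_{ij}=s_{2^N+1-i-j}$ if $i+j\le2^N$ and $0$ otherwise. With $\mathbf P=\begin{bmatrix}0&1\\1&0\end{bmatrix}$, $\mathbf Q=\begin{bmatrix}1&0\\0&0\end{bmatrix}$, $\mathbf R=\begin{bmatrix}0&0\\0&1\end{bmatrix}$, block matrices are $\widetilde{\mathbf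 M}^{(N)}_1=[\mathbf P\ \mathbf Q]$, $\widetilde{\mathbf M}^{(n)}_1=\begin{bmatrix}\mathbf P&\mathbf Q\\\mathbf 0&\mathbf R\end{bmatrix}$ ($2\le n\le N-1$), $\widetilde{\mathbf M}^{(1)}_1=\begin{bmatrix}\mathbf Q\\\mathbf R\end{bmatrix}$, $\widetilde{\mathbf M}^{(N)}_2=[\mathbf Q\ \mathbf 0]$, $\widetilde{\mathbf M}^{(n)}_2=\begin{bmatrix}\mathbf Q&\mathbf 0\\\mathbf R&\mathbf P\end{bmatrix}$ ($2\le n\le N-1$), $\widetilde{\mathbf M}^{(1)}_2=\begin{bmatrix}\mathbf 0\\\mathbf P\end{bmatrix}$; $\mathbf M^{(n)}_{q_n,k,q_{n-1}}$ is the $(q_n,q_{n-1})$-th $2\times2$ block of $\widetilde{\mathbf M}^{(n)}_k$ ($q_N=q_0=1$). For $t_n=(r_n,q_n)\in\{1,\dots,R_n\}\times\{1,2\}$ (with $t_N=t_0=1$ meaning $(1,1)$), $\mathbf H^{(n)}_{(r_n,q_n),(r_{n-1},q_{n-1})}=\sum_{k=1}^2 s^{(n)}_{r_{n-1},k,r_n}\mathbf M^{(n)}_{q_n,k,q_{n-1}}\in\mathbb R^{2\times2}$. $\otimes$ is the Kronecker product, with the index of the right factor varying fastest. Sums over $t_n$ range over all $2R_n$ pairs. *)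

theory Defs
  imports "Jordan_Normal_Form.Matrix"
begin

text \<open>Conventions: all indices are 0-based. The mode index k in {1,2} of the paper is
  k in {0,1} here, the block index q in {1,2} is q in {0,1}, the rank index r in {1..R_n}
  is r in {0..<R n}, and the entry s_i (i in {1..2^N}) is s (i-1).
  A TT core is a function core n r k r' = s^{(n)}_{r+1,k+1,r'+1}.\<close>

definition kron :: "real mat \<Rightarrow> real mat \<Rightarrow> real mat" where
  "kron A B = mat (dim_row A * dim_row B) (dim_col A * dim_col B)
     (\<lambda>(i,j). A $$ (i div dim_row B, j div dim_col B) * B $$ (i mod dim_row B, j mod dim_col B))"

definition kron_list :: "real mat list \<Rightarrow> real mat" where
  "kron_list As = foldr kron As (1\<^sub>m 1)"

definition msum :: "nat \<Rightarrow> nat \<Rightarrow> ('i \<Rightarrow> real mat) \<Rightarrow> 'i set \<Rightarrow> real mat" where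
  "msum nr nc f I = mat nr nc (\<lambda>ij. \<Sum>a\<in>I. f a $$ ij)"

text \<open>Admissible TT rank multi-indices (r_0,...,r_N) with r_0 = r_N = 0 (i.e. 1 in the paper);
  entries beyond N are fixed to 0.\<close>
definition rank_idx :: "nat \<Rightarrow> (nat \<Rightarrow> nat) \<Rightarrow> (nat \<Rightarrow> nat) set" where
  "rank_idx N R = {r. r 0 = 0 \<and> (\<forall>n. 0 < n \<and> n < N \<longrightarrow> r n < R n) \<and> (\<forall>n\<ge>N. r n = 0)}"

definition tt_entry :: "nat \<Rightarrow> (nat \<Rightarrow> nat) \<Rightarrow> (nat \<Rightarrow> nat \<Rightarrow> nat \<Rightarrow> nat \<Rightarrow> real)
                        \<Rightarrow> (nat \<Rightarrow> nat) \<Rightarrow> real" where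
  "tt_entry N R core k = (\<Sum>r\<in>rank_idx N R. \<Prod>n\<in>{1..N}. core n (r (n-1)) (k n) (r n))"

definition tt_vec :: "nat \<Rightarrow> (nat \<Rightarrow> nat) \<Rightarrow> (nat \<Rightarrow> nat \<Rightarrow> nat \<Rightarrow> nat \<Rightarrow> real) \<Rightarrow> nat \<Rightarrow> real" where
  "tt_vec N R core i = tt_entry N R core (\<lambda>m. (i div 2 ^ (m - 1)) mod 2)"

text \<open>The Hankel matrix H (2^N x 2^N): H_{ij} = s_{2^N+1-i-j} if i+j \<le> 2^N (1-based), else 0.\<close>
definition hankel :: "nat \<Rightarrow> (nat \<Rightarrow> real) \<Rightarrow> real mat" where
  "hankel N s = mat (2^N) (2^N)
     (\<lambda>(i,j). if i + j + 2 \<le> 2^N then s (2^N - 2 - i - j) else 0)"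

definition first_cols :: "nat \<Rightarrow> real mat \<Rightarrow> real mat" where
  "first_cols c A = mat (dim_row A) c (\<lambda>ij. A $$ ij)"

definition Pm :: "real mat" where "Pm = mat_of_rows_list 2 [[0,1],[1,0]]"
definition Qm :: "real mat" where "Qm = mat_of_rows_list 2 [[1,0],[0,0]]"
definition Rm :: "real mat" where "Rm = mat_of_rows_list 2 [[0,0],[0,1]]"

text \<open>Mblk N n k q q' = the (q+1,q'+1)-th 2x2 block of \<open>M~^{(n)}_{k+1}\<close>.\<close>
definition Mblk :: "nat \<Rightarrow> nat \<Rightarrow> nat \<Rightarrow> nat \<Rightarrow> nat \<Rightarrow> real mat" where
  "Mblk N n k q q' =
    (if n = N then
       (if k = 0 then (if q' = 0 then Pm else Qm) else (if q' = 0 then Qm else 0\<^sub>m 2 2))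
     else if n = 1 then
       (if k = 0 then (if q = 0 then Qm else Rm) else (if q = 0 then 0\<^sub>m 2 2 else Pm))
     else
       (if k = 0 then
          (if q = 0 then (if q' = 0 then Pm else Qm) else (if q' = 0 then 0\<^sub>m 2 2 else Rm))
        else
          (if q = 0 then (if q' = 0 then Qm else 0\<^sub>m 2 2) else (if q' = 0 then Rm else Pm))))"

definition Hcore :: "nat \<Rightarrow> (nat \<Rightarrow> nat \<Rightarrow> nat \<Rightarrow> nat \<Rightarrow> real) \<Rightarrow> nat \<Rightarrow> nat \<times> nat \<Rightarrow> nat \<times> nat \<Rightarrow> real mat" where
  "Hcore N core n t t' =
     core n (fst t') 0 (fst t) \<cdot>\<^sub>m Mblk N n 0 (snd t) (snd t')
   + core n (fst t') 1 (fst t) \<cdot>\<^sub>m Mblk N n 1 (snd t) (snd t')"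

definition t_idx :: "nat \<Rightarrow> (nat \<Rightarrow> nat) \<Rightarrow> (nat \<Rightarrow> nat \<times> nat) set" where
  "t_idx N R = {t. t 0 = (0,0) \<and> (\<forall>n. 0 < n \<and> n < N \<longrightarrow> fst (t n) < R n \<and> snd (t n) < 2)
                   \<and> (\<forall>n\<ge>N. t n = (0,0))}"

definition first_col :: "real mat \<Rightarrow> real mat" where
  "first_col A = mat (dim_row A) 1 (\<lambda>(i,_). A $$ (i,0))"

end

theory Submission
  imports Defs "HOL-Library.FuncSet"
begin

(* Entry (i,j) of the sum of Kronecker products is a sum over t = (r,q) of products over n of
   entries H^{(n)}_{t_n,t_{n-1}}(i_n, j_n), where i_n, j_n are the binary digits of i and j.
   Expanding H^{(n)} into its core slices, the block M^{(n)}_{q_n,k,q_{n-1}} contributes the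
   indicator of one column of the binary addition i + j + x + 1 = 2^N - 1: digits i_n, j_n, k
   and carry q_{n-1} in give digit 1 and carry q_n out, with carry 1 into the first column and
   carry 0 out of the last. Such carries exist, and are then unique, exactly when the k's are the
   digits of x = 2^N - 2 - i - j; so the sum over q selects these digits, and the sum over r that
   is left is the TT representation of s at index x, i.e. the Hankel entry. *)

definition digit :: "nat \<Rightarrow> nat \<Rightarrow> nat" where
  "digit n x = x div 2^(n-1) mod 2"

lemma digit_less_2 [simp]: "digit n x < 2"
  by (simp add: digit_def)

lemma digit_mod_pow2:
  assumes "1 \<le> n" and "n \<le> m"
  shows "digit n (x mod 2^m) = digit n x"
proof -
  have "n - 1 < m" using assms by simp
  then show ?thesis unfolding digit_def by (simp add: even_mod_exp_div_exp_iff mod2_eq_if)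
qed

lemma div_pow2_eq_digit: "x < 2^Suc m \<Longrightarrow> x div 2^m = digit (Suc m) x"
  by (simp add: digit_def div_less_iff_less_mult mult.commute)

lemma mod_pow2_Suc: "x mod 2^Suc m = x mod 2^m + digit (Suc m) x * 2^m"
proof -
  have "x mod 2^Suc m = x mod (2^m * 2)" by (simp add: mult.commute)
  also have "\<dots> = 2^m * (x div 2^m mod 2) + x mod 2^m" by (rule mod_mult2_eq)
  finally show ?thesis by (simp add: digit_def)
qed

lemma sum_digits: "(\<Sum>n\<in>{1..m}. digit n x * 2^(n-1)) = x mod 2^m"
proof (induction m)
  case (Suc m)
  then have "(\<Sum>n\<in>{1..Suc m}. digit n x * 2^(n-1)) = x mod 2^m + digit (Suc m) x * 2^m"
    by simp
  also have "\<dots> = x mod 2^Suc m" by (rule mod_pow2_Suc[symmetric])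
  finally show ?case .
qed simp

lemma sum_digits_less:
  fixes k :: "nat \<Rightarrow> nat"
  assumes "\<forall>n\<in>{1..m}. k n < 2"
  shows "(\<Sum>n\<in>{1..m}. k n * 2^(n-1)) < 2^m"
  using assms
proof (induction m)
  case (Suc m)
  have "k (Suc m) < 2" and IH: "(\<Sum>n\<in>{1..m}. k n * 2^(n-1)) < 2^m"
    using Suc by simp_all
  then have "k (Suc m) * 2^m \<le> 1 * 2^m" by (intro mult_le_mono1) simp
  moreover have "(\<Sum>n\<in>{1..Suc m}. k n * 2^(n-1)) = (\<Sum>n\<in>{1..m}. k n * 2^(n-1)) + k (Suc m) * 2^m"
    by simp
  moreover have "(2::nat)^Suc m = 2^m + 2^m" by simp
  ultimately show ?case using IH by linarith
qed simp

lemma digit_sum_digits: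
  assumes "\<forall>n\<in>{1..m}. k n < 2" and "l \<in> {1..m}"
  shows "digit l (\<Sum>n\<in>{1..m}. k n * 2^(n-1)) = k l"
  using assms
proof (induction m)
  case (Suc m)
  let ?S = "\<Sum>n\<in>{1..m}. k n * 2^(n-1)"
  have S: "?S < 2^m" using Suc.prems(1) by (intro sum_digits_less) auto
  have sum: "(\<Sum>n\<in>{1..Suc m}. k n * 2^(n-1)) = ?S + k (Suc m) * 2^m" by simp
  show ?case
  proof (cases "l = Suc m")
    case True
    with Suc.prems S show ?thesis by (simp add: sum digit_def)
  next
    case False
    with Suc.prems have l: "l \<in> {1..m}" by auto
    have "digit l (?S + k (Suc m) * 2^m) = digit l ((?S + k (Suc m) * 2^m) mod 2^m)"
      using l by (intro digit_mod_pow2[symmetric]) auto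
    also have "\<dots> = digit l ?S" using S by simp
    finally show ?thesis using Suc l by (simp add: sum)
  qed
qed simp

definition adder_cell :: "nat \<Rightarrow> nat \<Rightarrow> nat \<Rightarrow> nat \<Rightarrow> nat \<Rightarrow> real" where
  "adder_cell a b k c c' = of_bool (a + b + k + c = 1 + 2 * c')"

definition carry_seqs :: "nat \<Rightarrow> (nat \<Rightarrow> nat) set" where
  "carry_seqs N = {q. \<forall>n. (n \<in> {0<..<N} \<longrightarrow> q n \<in> {..<2}) \<and> (n \<notin> {0<..<N} \<longrightarrow> q n = 0)}"

(* t_idx fixes q_0 = 0, but the blocks of the first core act as if the carry into column 1 were 1. *)
definition carry :: "(nat \<Rightarrow> nat) \<Rightarrow> nat \<Rightarrow> nat" where
  "carry q m = (if m = 0 then 1 else q m)"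

definition carries_of :: "nat \<Rightarrow> nat \<Rightarrow> nat \<Rightarrow> (nat \<Rightarrow> nat) \<Rightarrow> (nat \<Rightarrow> nat) \<Rightarrow> bool" where
  "carries_of N i j k q \<longleftrightarrow>
     (\<forall>n\<in>{1..N}. digit n i + digit n j + k n + carry q (n-1) = 1 + 2 * q n)"

lemma carry_seqs_outside: "q \<in> carry_seqs N \<Longrightarrow> n \<notin> {0<..<N} \<Longrightarrow> q n = 0"
  unfolding carry_seqs_def by blast

lemma carry_seqs_less_2:
  assumes "q \<in> carry_seqs N"
  shows "q n < 2"
proof (cases "n \<in> {0<..<N}")
  case True
  with assms show ?thesis unfolding carry_seqs_def by blast
next
  case False
  then show ?thesis using carry_seqs_outside[OF assms False] by simp
qed

lemma finite_carry_seqs: "finite (carry_seqs N)"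
  unfolding carry_seqs_def by (rule finite_set_of_finite_funs) simp_all

lemma carry_chain_sum:
  fixes a b k c :: "nat \<Rightarrow> nat"
  assumes "\<forall>n\<in>{1..N}. a n + b n + k n + c (n-1) = 1 + 2 * c n" and "c 0 = 1" and "m \<le> N"
  shows "(\<Sum>n\<in>{1..m}. (a n + b n + k n) * 2^(n-1)) + 2 = 2^m * (1 + c m)"
  using assms(3)
proof (induction m)
  case (Suc m)
  have cell: "a (Suc m) + b (Suc m) + k (Suc m) + c m = 1 + 2 * c (Suc m)"
    using assms(1) Suc.prems by force
  have "(\<Sum>n\<in>{1..Suc m}. (a n + b n + k n) * 2^(n-1)) + 2
      = ((\<Sum>n\<in>{1..m}. (a n + b n + k n) * 2^(n-1)) + 2) + (a (Suc m) + b (Suc m) + k (Suc m)) * 2^m"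
    by simp
  also have "\<dots> = 2^m * (1 + (a (Suc m) + b (Suc m) + k (Suc m) + c m))"
    using Suc by (simp add: algebra_simps)
  also have "\<dots> = 2^Suc m * (1 + c (Suc m))"
    unfolding cell by (simp add: algebra_simps)
  finally show ?case .
qed (use assms(2) in simp)

lemma carries_of_chain:
  assumes "carries_of N i j k q" and "q \<in> carry_seqs N" and "m \<le> N"
  shows "(\<Sum>n\<in>{1..m}. (digit n i + digit n j + k n) * 2^(n-1)) + 2 = 2^m * (1 + carry q m)"
proof (rule carry_chain_sum[OF _ _ assms(3)])
  show "\<forall>n\<in>{1..N}. digit n i + digit n j + k n + carry q (n-1) = 1 + 2 * carry q n"
    using assms(1) by (auto simp: carries_of_def carry_def)
qed (simp add: carry_def)

lemma carries_of_unique: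
  assumes "carries_of N i j k q" "q \<in> carry_seqs N" "carries_of N i j k q'" "q' \<in> carry_seqs N"
  shows "q = q'"
proof
  fix m
  show "q m = q' m"
  proof (cases "m \<in> {0<..<N}")
    case True
    then have "m \<le> N" by simp
    then have "2^m * (1 + carry q m) = 2^m * (1 + carry q' m)"
      using carries_of_chain[OF assms(1,2)] carries_of_chain[OF assms(3,4)] by simp
    with True show ?thesis by (simp add: carry_def)
  next
    case False
    then show ?thesis
      using carry_seqs_outside[OF assms(2) False] carry_seqs_outside[OF assms(4) False] by simp
  qed
qed

lemma carries_of_imp_digits:
  assumes "N \<ge> 1" "i < 2^N" "j < 2^N" "\<forall>n\<in>{1..N}. k n < 2"
    and "carries_of N i j k q" "q \<in> carry_seqs N"
  shows "i + j + 2 \<le> 2^N \<and> (\<forall>n\<in>{1..N}. k n = digit n (2^N - 2 - i - j))"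
proof -
  have "carry q N = 0" using assms(1,6) by (simp add: carry_def carry_seqs_def)
  then have "(\<Sum>n\<in>{1..N}. (digit n i + digit n j + k n) * 2^(n-1)) + 2 = 2^N"
    using carries_of_chain[OF assms(5,6) order_refl] by simp
  moreover have "(\<Sum>n\<in>{1..N}. (digit n i + digit n j + k n) * 2^(n-1))
      = (\<Sum>n\<in>{1..N}. digit n i * 2^(n-1)) + (\<Sum>n\<in>{1..N}. digit n j * 2^(n-1))
        + (\<Sum>n\<in>{1..N}. k n * 2^(n-1))"
    by (simp add: sum.distrib algebra_simps)
  moreover have "(\<Sum>n\<in>{1..N}. digit n i * 2^(n-1)) = i" "(\<Sum>n\<in>{1..N}. digit n j * 2^(n-1)) = j"
    using sum_digits[where m=N and x=i] sum_digits[where m=N and x=j] assms(2,3) by simp_all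
  ultimately have "i + j + (\<Sum>n\<in>{1..N}. k n * 2^(n-1)) + 2 = 2^N"
    by linarith
  then have "2^N - 2 - i - j = (\<Sum>n\<in>{1..N}. k n * 2^(n-1))" and "i + j + 2 \<le> 2^N"
    by linarith+
  then show ?thesis using digit_sum_digits[OF assms(4)] by simp
qed

(* c is the carry out of the m lowest columns of the addition i + j + x + 1 = 2^N - 1. *)
lemma partial_sums_carry:
  fixes i j x :: nat
  assumes "i + j + x + 2 = 2^N" and "m \<le> N"
  defines "c \<equiv> (i mod 2^m + j mod 2^m + x mod 2^m + 2) div 2^m - 1"
  shows "i mod 2^m + j mod 2^m + x mod 2^m + 2 = 2^m * (1 + c)" and "c \<le> 1"
proof -
  define S where "S = i mod 2^m + j mod 2^m + x mod 2^m + 2"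
  have "S mod 2^m = (i + j + x + 2) mod 2^m"
    unfolding S_def by (metis (no_types, lifting) mod_add_eq mod_mod_trivial)
  also have "\<dots> = 0" using assms(1,2) by (simp add: le_imp_power_dvd)
  finally have "2^m dvd S" by (simp add: dvd_eq_mod_eq_0)
  then have S: "S = 2^m * (S div 2^m)" by simp
  have "i mod 2^m < 2^m" "j mod 2^m < 2^m" "x mod 2^m < 2^m" by simp_all
  then have "S < 2^m * 3" unfolding S_def by linarith
  then have "S div 2^m < 3" by (intro less_mult_imp_div_less) (simp add: mult.commute)
  moreover have "S div 2^m \<noteq> 0" using S by (metis S_def add_is_0 mult_0_right zero_neq_numeral)
  ultimately show "S = 2^m * (1 + c)" and "c \<le> 1"
    using S unfolding c_def S_def[symmetric] by simp_all
qed

lemma carries_of_exist: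
  assumes "N \<ge> 1" "i < 2^N" "j < 2^N" "i + j + 2 \<le> 2^N"
    and "\<forall>n\<in>{1..N}. k n = digit n (2^N - 2 - i - j)"
  shows "\<exists>q\<in>carry_seqs N. carries_of N i j k q"
proof -
  define x where "x = 2^N - 2 - i - j"
  have e: "i + j + x + 2 = 2^N" using assms(4) by (simp add: x_def)
  define c where "c m = (i mod 2^m + j mod 2^m + x mod 2^m + 2) div 2^m - 1" for m
  have c_eq: "i mod 2^m + j mod 2^m + x mod 2^m + 2 = 2^m * (1 + c m)" and c_le: "c m \<le> 1"
    if "m \<le> N" for m
    using partial_sums_carry[OF e that] unfolding c_def by simp_all
  have "x < 2^N" using e by simp
  then have "2^N * 1 = 2^N * (1 + c N)" using c_eq[of N] e assms(2,3) by simp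
  then have c_N: "c N = 0" by simp
  define q where "q n = (if n \<in> {0<..<N} then c n else 0)" for n
  have carry_q: "carry q m = c m" if "m \<le> N" for m
    using that c_N by (cases "m = 0") (auto simp: carry_def q_def c_def)
  have "q \<in> carry_seqs N"
    unfolding carry_seqs_def
  proof (intro CollectI allI conjI impI)
    fix n
    show "n \<in> {0<..<N} \<Longrightarrow> q n \<in> {..<2}" using c_le[of n] by (simp add: q_def)
    show "n \<notin> {0<..<N} \<Longrightarrow> q n = 0" by (auto simp: q_def)
  qed
  moreover have "carries_of N i j k q"
    unfolding carries_of_def
  proof
    fix n assume n: "n \<in> {1..N}"
    then obtain m where m: "n = Suc m" "m < N" by (cases n) auto
    let ?D = "digit n i + digit n j + digit n x"
    have "i mod 2^n + j mod 2^n + x mod 2^n = i mod 2^m + j mod 2^m + x mod 2^m + ?D * 2^m"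
      unfolding m(1) mod_pow2_Suc by (simp add: algebra_simps)
    then have "2^m * (2 * (1 + c n)) = 2^m * (1 + c m + ?D)"
      using c_eq[of m] c_eq[of n] m n by (simp add: algebra_simps)
    then have "2 * (1 + c n) = 1 + c m + ?D" by (subst (asm) mult_left_cancel) simp_all
    moreover have "k n = digit n x" using assms(5) n by (simp add: x_def)
    moreover have "q n = c n" using carry_q[of n] n by (simp add: carry_def)
    ultimately show "digit n i + digit n j + k n + carry q (n-1) = 1 + 2 * q n"
      using carry_q[of m] m by simp
  qed
  ultimately show ?thesis by blast
qed

lemma prod_of_bool:
  "finite A \<Longrightarrow> (\<Prod>x\<in>A. of_bool (P x) :: 'a::comm_semiring_1) = of_bool (\<forall>x\<in>A. P x)"
  by (induction A rule: finite_induct) auto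

lemma sum_carries_adder_cells:
  assumes "N \<ge> 1" "i < 2^N" "j < 2^N" "\<forall>n\<in>{1..N}. k n < 2"
  shows "(\<Sum>q\<in>carry_seqs N. \<Prod>n\<in>{1..N}. adder_cell (digit n i) (digit n j) (k n) (carry q (n-1)) (q n))
       = of_bool (i + j + 2 \<le> 2^N \<and> (\<forall>n\<in>{1..N}. k n = digit n (2^N - 2 - i - j)))"
    (is "?lhs = of_bool ?digits")
proof -
  have "?lhs = (\<Sum>q\<in>carry_seqs N. of_bool (carries_of N i j k q))"
    by (simp add: adder_cell_def carries_of_def prod_of_bool)
  also have "\<dots> = of_nat (card (carry_seqs N \<inter> {q. carries_of N i j k q}))"
    using finite_carry_seqs by simp
  also have "\<dots> = of_bool ?digits"
  proof (cases ?digits)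
    case True
    then obtain q where q: "q \<in> carry_seqs N" "carries_of N i j k q"
      using carries_of_exist[OF assms(1-3)] by blast
    then have "carry_seqs N \<inter> {q. carries_of N i j k q} = {q}"
      using carries_of_unique by blast
    with True show ?thesis by simp
  next
    case False
    then have "carry_seqs N \<inter> {q. carries_of N i j k q} = {}"
      using carries_of_imp_digits[OF assms] by blast
    with False show ?thesis by simp
  qed
  finally show ?thesis .
qed

lemma PQR_index:
  assumes "a < 2" "b < 2"
  shows "Pm $$ (a,b) = of_bool (a + b = 1)"
    and "Qm $$ (a,b) = of_bool (a = 0 \<and> b = 0)"
    and "Rm $$ (a,b) = of_bool (a = 1 \<and> b = 1)"
  using assms by (auto simp: Pm_def Qm_def Rm_def mat_of_rows_list_def less_2_cases_iff)

lemma Mblk_index: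
  assumes "N \<ge> 2" "n \<in> {1..N}" "q \<in> carry_seqs N" "a < 2" "b < 2" "k < 2"
  shows "Mblk N n k (q n) (q (n-1)) $$ (a,b) = adder_cell a b k (carry q (n-1)) (q n)"
proof -
  have bits: "a \<in> {0,1}" "b \<in> {0,1}" "k \<in> {0,1}" "q n \<in> {0,1}" "q (n-1) \<in> {0,1}"
    using assms(4-6) carry_seqs_less_2[OF assms(3)] by (auto simp: less_2_cases_iff)
  consider "n = N" | "n = 1" | "1 < n" "n < N" using assms(1,2) by fastforce
  then show ?thesis
  proof cases
    case 1
    then have "q n = 0" "n - 1 \<noteq> 0" using assms(1) carry_seqs_outside[OF assms(3), of n] by auto
    then show ?thesis using 1 bits by (auto simp: Mblk_def PQR_index adder_cell_def carry_def)
  next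
    case 2
    then show ?thesis using assms(1) bits
      by (auto simp: Mblk_def PQR_index adder_cell_def carry_def; presburger)
  next
    case 3
    then show ?thesis using bits
      by (auto simp: Mblk_def PQR_index adder_cell_def carry_def; presburger)
  qed
qed

lemma dim_PQR [simp]:
  "dim_row Pm = 2" "dim_col Pm = 2" "dim_row Qm = 2" "dim_col Qm = 2" "dim_row Rm = 2" "dim_col Rm = 2"
  by (simp_all add: Pm_def Qm_def Rm_def mat_of_rows_list_def)

lemma dim_Mblk [simp]: "dim_row (Mblk N n k q q') = 2" "dim_col (Mblk N n k q q') = 2"
  by (simp_all add: Mblk_def)

lemma dim_Hcore [simp]: "dim_row (Hcore N core n t t') = 2" "dim_col (Hcore N core n t t') = 2"
  by (simp_all add: Hcore_def)

lemma Hcore_index: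
  assumes "a < 2" "b < 2"
  shows "Hcore N core n t t' $$ (a,b)
       = (\<Sum>k\<in>{0,1}. core n (fst t') k (fst t) * Mblk N n k (snd t) (snd t') $$ (a,b))"
  using assms by (simp add: Hcore_def)

lemma dim_kron [simp]:
  "dim_row (kron A B) = dim_row A * dim_row B" "dim_col (kron A B) = dim_col A * dim_col B"
  by (simp_all add: kron_def)

lemma kron_index:
  "i < dim_row A * dim_row B \<Longrightarrow> j < dim_col A * dim_col B \<Longrightarrow>
   kron A B $$ (i,j) = A $$ (i div dim_row B, j div dim_col B) * B $$ (i mod dim_row B, j mod dim_col B)"
  by (simp add: kron_def)

lemma kron_list_Cons: "kron_list (A # As) = kron A (kron_list As)"
  by (simp add: kron_list_def)

lemma dim_kron_list_rev_upt:
  assumes "\<And>n. dim_row (A n) = 2" "\<And>n. dim_col (A n) = 2"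
  shows "dim_row (kron_list (map A (rev [1..<Suc m]))) = 2^m"
    and "dim_col (kron_list (map A (rev [1..<Suc m]))) = 2^m"
  by (induction m) (simp_all add: assms kron_list_def)

lemma kron_list_rev_upt_index:
  assumes "\<And>n. dim_row (A n) = 2" "\<And>n. dim_col (A n) = 2" and "i < 2^m" "j < 2^m"
  shows "kron_list (map A (rev [1..<Suc m])) $$ (i,j) = (\<Prod>n\<in>{1..m}. A n $$ (digit n i, digit n j))"
  using assms(3,4)
proof (induction m arbitrary: i j)
  case 0
  then show ?case by (simp add: kron_list_def)
next
  case (Suc m)
  let ?K = "kron_list (map A (rev [1..<Suc m]))"
  have "rev [1..<Suc (Suc m)] = Suc m # rev [1..<Suc m]" by simp
  then have "kron_list (map A (rev [1..<Suc (Suc m)])) = kron (A (Suc m)) ?K"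
    by (simp only: list.map kron_list_Cons)
  also have "\<dots> $$ (i,j) = A (Suc m) $$ (i div 2^m, j div 2^m) * ?K $$ (i mod 2^m, j mod 2^m)"
    using kron_index[of i "A (Suc m)" ?K j] Suc.prems
    unfolding dim_kron_list_rev_upt[OF assms(1,2)] assms(1,2) by simp
  also have "?K $$ (i mod 2^m, j mod 2^m)
      = (\<Prod>n\<in>{1..m}. A n $$ (digit n (i mod 2^m), digit n (j mod 2^m)))"
    by (rule Suc.IH) simp_all
  also have "\<dots> = (\<Prod>n\<in>{1..m}. A n $$ (digit n i, digit n j))"
    by (intro prod.cong) (auto simp: digit_mod_pow2)
  finally show ?case
    using Suc.prems by (simp add: div_pow2_eq_digit mult.commute)
qed

(* Since j < 2^m, the leading digit of j is 0, so only the first column of the leading factor is read. *)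
lemma kron_first_col_index:
  assumes "\<And>n. dim_row (A n) = 2" "\<And>n. dim_col (A n) = 2" and "i < 2^Suc m" "j < 2^m"
  shows "kron_list (first_col (A (Suc m)) # map A (rev [1..<Suc m])) $$ (i,j)
       = (\<Prod>n\<in>{1..Suc m}. A n $$ (digit n i, digit n j))"
proof -
  let ?K = "kron_list (map A (rev [1..<Suc m]))"
  have "digit (Suc m) j = 0" using assms(4) by (simp add: digit_def)
  moreover have "kron_list (first_col (A (Suc m)) # map A (rev [1..<Suc m])) $$ (i,j)
      = first_col (A (Suc m)) $$ (i div 2^m, 0) * ?K $$ (i mod 2^m, j)"
    using kron_index[of i "first_col (A (Suc m))" ?K j] assms(3,4)
    unfolding kron_list_Cons dim_kron_list_rev_upt[OF assms(1,2)]
    by (simp add: first_col_def assms(1))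
  moreover have "?K $$ (i mod 2^m, j) = (\<Prod>n\<in>{1..m}. A n $$ (digit n (i mod 2^m), digit n j))"
    using assms(4) by (intro kron_list_rev_upt_index[OF assms(1,2)]) simp_all
  moreover have "\<dots> = (\<Prod>n\<in>{1..m}. A n $$ (digit n i, digit n j))"
    by (intro prod.cong) (auto simp: digit_mod_pow2)
  ultimately show ?thesis
    using assms by (simp add: first_col_def div_pow2_eq_digit mult.commute)
qed

lemma t_idx_eq_image: "t_idx N R = (\<lambda>(r, q) n. (r n, q n)) ` (rank_idx N R \<times> carry_seqs N)"
proof
  show "t_idx N R \<subseteq> (\<lambda>(r, q) n. (r n, q n)) ` (rank_idx N R \<times> carry_seqs N)"
  proof
    fix t assume t: "t \<in> t_idx N R"
    have "snd \<circ> t \<in> carry_seqs N"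
      unfolding carry_seqs_def
    proof (intro CollectI allI conjI impI)
      fix n
      show "n \<in> {0<..<N} \<Longrightarrow> (snd \<circ> t) n \<in> {..<2}" using t by (simp add: t_idx_def)
      show "n \<notin> {0<..<N} \<Longrightarrow> (snd \<circ> t) n = 0"
        using t by (cases "n = 0") (auto simp: t_idx_def)
    qed
    moreover have "fst \<circ> t \<in> rank_idx N R" using t by (simp add: t_idx_def rank_idx_def)
    ultimately show "t \<in> (\<lambda>(r, q) n. (r n, q n)) ` (rank_idx N R \<times> carry_seqs N)"
      by (intro image_eqI[of _ _ "(fst \<circ> t, snd \<circ> t)"]) simp_all
  qed
  show "(\<lambda>(r, q) n. (r n, q n)) ` (rank_idx N R \<times> carry_seqs N) \<subseteq> t_idx N R"
    by (auto simp: t_idx_def rank_idx_def carry_seqs_less_2 carry_seqs_outside)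
qed

lemma inj_on_pair_fun: "inj_on (\<lambda>(r, q) n. (r n, q n)) X"
  by (auto simp: inj_on_def fun_eq_iff)

lemma sum_carries_Hcore_prod:
  fixes core :: "nat \<Rightarrow> nat \<Rightarrow> nat \<Rightarrow> nat \<Rightarrow> real"
  assumes "N \<ge> 2" "i < 2^N" "j < 2^N"
  shows "(\<Sum>q\<in>carry_seqs N. \<Prod>n\<in>{1..N}.
            Hcore N core n (r n, q n) (r (n-1), q (n-1)) $$ (digit n i, digit n j))
       = of_bool (i + j + 2 \<le> 2^N) * (\<Prod>n\<in>{1..N}. core n (r (n-1)) (digit n (2^N - 2 - i - j)) (r n))"
proof -
  define x where "x = 2^N - 2 - i - j"
  let ?PI = "PiE {1..N} (\<lambda>_. {0, 1::nat})"
  let ?C = "\<lambda>g. \<Prod>n\<in>{1..N}. core n (r (n-1)) (g n) (r n)"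
  let ?E = "\<lambda>q g. \<Prod>n\<in>{1..N}. adder_cell (digit n i) (digit n j) (g n) (carry q (n-1)) (q n)"
  define g0 where "g0 = restrict (\<lambda>n. digit n x) {1..N}"
  have g0: "g0 \<in> ?PI" using less_2_cases[OF digit_less_2] by (auto simp: g0_def)
  have expand: "(\<Prod>n\<in>{1..N}. Hcore N core n (r n, q n) (r (n-1), q (n-1)) $$ (digit n i, digit n j))
      = (\<Sum>g\<in>?PI. ?C g * ?E q g)" if q: "q \<in> carry_seqs N" for q
  proof -
    have "(\<Prod>n\<in>{1..N}. Hcore N core n (r n, q n) (r (n-1), q (n-1)) $$ (digit n i, digit n j))
        = (\<Prod>n\<in>{1..N}. \<Sum>k\<in>{0,1}. core n (r (n-1)) k (r n)
             * adder_cell (digit n i) (digit n j) k (carry q (n-1)) (q n))"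
      using Mblk_index[OF assms(1) _ q] by (intro prod.cong refl) (simp add: Hcore_index)
    also have "\<dots> = (\<Sum>g\<in>?PI. \<Prod>n\<in>{1..N}. core n (r (n-1)) (g n) (r n)
             * adder_cell (digit n i) (digit n j) (g n) (carry q (n-1)) (q n))"
      by (rule prod_sum_PiE) auto
    finally show ?thesis by (simp add: prod.distrib)
  qed
  have select: "?C g * (\<Sum>q\<in>carry_seqs N. ?E q g)
      = (if g = g0 then of_bool (i + j + 2 \<le> 2^N) * ?C g else 0)" if g: "g \<in> ?PI" for g
  proof -
    have "\<forall>n\<in>{1..N}. g n < 2" using g by (auto simp: PiE_iff)
    moreover have "(\<forall>n\<in>{1..N}. g n = digit n x) \<longleftrightarrow> g = g0"
      using g by (auto simp: g0_def PiE_def extensional_def fun_eq_iff)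
    ultimately have "(\<Sum>q\<in>carry_seqs N. ?E q g) = of_bool (i + j + 2 \<le> 2^N \<and> g = g0)"
      using sum_carries_adder_cells[of N i j g] assms by (simp add: x_def)
    then show ?thesis by simp
  qed
  have "(\<Sum>q\<in>carry_seqs N. \<Prod>n\<in>{1..N}.
            Hcore N core n (r n, q n) (r (n-1), q (n-1)) $$ (digit n i, digit n j))
      = (\<Sum>q\<in>carry_seqs N. \<Sum>g\<in>?PI. ?C g * ?E q g)"
    by (intro sum.cong refl expand)
  also have "\<dots> = (\<Sum>g\<in>?PI. \<Sum>q\<in>carry_seqs N. ?C g * ?E q g)"
    by (rule sum.swap)
  also have "\<dots> = (\<Sum>g\<in>?PI. ?C g * (\<Sum>q\<in>carry_seqs N. ?E q g))"
    by (simp add: sum_distrib_left)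
  also have "\<dots> = (\<Sum>g\<in>?PI. if g = g0 then of_bool (i + j + 2 \<le> 2^N) * ?C g else 0)"
    by (intro sum.cong refl select)
  also have "\<dots> = of_bool (i + j + 2 \<le> 2^N) * ?C g0"
    using g0 by (simp add: sum.delta finite_PiE)
  also have "?C g0 = (\<Prod>n\<in>{1..N}. core n (r (n-1)) (digit n x) (r n))"
    by (intro prod.cong) (auto simp: g0_def)
  finally show ?thesis unfolding x_def .
qed

lemma kron_sum_index:
  fixes core :: "nat \<Rightarrow> nat \<Rightarrow> nat \<Rightarrow> nat \<Rightarrow> real"
  assumes "N \<ge> 2" "i < 2^N" "j < 2^(N-1)"
  shows "msum (2^N) (2^(N-1))
      (\<lambda>t. kron_list (first_col (Hcore N core N (t N) (t (N-1)))
                     # map (\<lambda>n. Hcore N core n (t n) (t (n-1))) (rev [1..<N])))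
      (t_idx N R) $$ (i,j)
    = of_bool (i + j + 2 \<le> 2^N) * tt_vec N R core (2^N - 2 - i - j)"
proof -
  obtain m where m: "N = Suc m" using assms(1) by (cases N) auto
  have j: "j < 2^N" using assms(3) m by simp
  let ?G = "\<lambda>t. \<Prod>n\<in>{1..N}. Hcore N core n (t n) (t (n-1)) $$ (digit n i, digit n j)"
  have summand: "kron_list (first_col (Hcore N core N (t N) (t (N-1)))
                     # map (\<lambda>n. Hcore N core n (t n) (t (n-1))) (rev [1..<N])) $$ (i,j) = ?G t"
    for t :: "nat \<Rightarrow> nat \<times> nat"
    using kron_first_col_index[where A = "\<lambda>n. Hcore N core n (t n) (t (n-1))" and m = m and i = i and j = j]
      assms(2,3)
    unfolding m by (simp del: upt_Suc)
  have "msum (2^N) (2^(N-1))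
      (\<lambda>t. kron_list (first_col (Hcore N core N (t N) (t (N-1)))
                     # map (\<lambda>n. Hcore N core n (t n) (t (n-1))) (rev [1..<N])))
      (t_idx N R) $$ (i,j) = (\<Sum>t\<in>t_idx N R. ?G t)"
    unfolding msum_def index_mat(1)[OF assms(2,3)] summand ..
  also have "\<dots> = (\<Sum>rq\<in>rank_idx N R \<times> carry_seqs N. ?G ((\<lambda>(r, q) n. (r n, q n)) rq))"
    unfolding t_idx_eq_image sum.reindex[OF inj_on_pair_fun] comp_def ..
  also have "\<dots> = (\<Sum>r\<in>rank_idx N R. \<Sum>q\<in>carry_seqs N. ?G (\<lambda>n. (r n, q n)))"
    by (simp add: sum.cartesian_product case_prod_unfold)
  also have "\<dots> = of_bool (i + j + 2 \<le> 2^N) * tt_vec N R core (2^N - 2 - i - j)"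
    unfolding sum_carries_Hcore_prod[OF assms(1,2) j]
    by (simp add: tt_vec_def tt_entry_def digit_def sum_distrib_left)
  finally show ?thesis .
qed

theorem mainTheorem7:
  fixes N :: nat and R :: "nat \<Rightarrow> nat"
    and core :: "nat \<Rightarrow> nat \<Rightarrow> nat \<Rightarrow> nat \<Rightarrow> real"
  assumes "N \<ge> 2"
    and "R 0 = 1" and "R N = 1"
    and "\<forall>n. 0 < n \<and> n < N \<longrightarrow> R n \<ge> 1"
  shows "first_cols (2^(N-1)) (hankel N (tt_vec N R core)) =
    msum (2^N) (2^(N-1))
      (\<lambda>t. kron_list (first_col (Hcore N core N (t N) (t (N-1)))
                     # map (\<lambda>n. Hcore N core n (t n) (t (n-1))) (rev [1..<N])))
      (t_idx N R)"
proof (rule eq_matI, goal_cases)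
  case (1 i j)
  then have i: "i < 2^N" and j: "j < 2^(N-1)" by (simp_all add: msum_def)
  have "(2::nat)^(N-1) \<le> 2^N" by (rule power_increasing) simp_all
  then have "j < 2^N" using j by linarith
  then show ?case
    using kron_sum_index[OF assms(1) i j] i j by (simp add: first_cols_def hankel_def)
qed (simp_all add: first_cols_def hankel_def msum_def)

end
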